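(* Let $A$ be a MON-1qfa over $\Sigma$ and let $L_A\subseteq\Sigma^*$ be a language recognized by $A$ with cut-point $\lambda$ isolated by $\delta$. Then there exists a Latvian automaton $A'$ recognizing $L_{A'}=L_A$ with cut-point $\lambda'=\frac12$ isolated by $\delta'=\frac{\delta}{2\cdot\max(\lambda,1-\lambda)}$.
   Context: A MON-1qfa (measure-only one-way quantum finite automaton) over a finite alphabet $\Sigma$ is a tuple $A=\langle\Sigma\cup\{\#\},(O_c)_{c\in\Sigma\cup\{\#\}},\pi_0,F\rangle$, where $\pi_0\in\mathbb{C}^{1\times m}$ has norm $1$, each $O_c$ is an observable, i.e. a Hermitian $m\times m$ matrix with spectral decomposition $O_c=\sum_{r\in V(O_c)} r\,P_c(r)$ ($V(O_c)$ its set of eigenvalues, $P_c(r)$ the orthogonal projector onto the eigenspace of $r$), and $F\subseteq V(O_\#)$. On input $x=x_1\cdots x_n\in\Sigma^*$ the automaton starts in $\pi_0$, performs successively the measurements $O_{x_1},\dots,O_{x_n}$ and finally $O_\#$, and accepts iff the outcome of the last measurement lies in $F$. Formally, with $\rho_0=\pi_0^\dagger\pi_0$ and $\rho_i=\sum_{r\in V(O_{x_i})}P_{x_i}(r)\rho_{i-1}P_{x_i}(r)$, the acceptance probability is $p_A(x)=\sum_{r\in F}\mathrm{tr}(P_\#(r)\rho_n)$. A Latvian automaton is a one-way quantum automaton $A'=(Q,\Sigma,\{\mathcal{A}_a\},q_0,Q_{acc})$ with finite set of basis states $Q$, initial state $|q_0\rangle$, where for each $a\in\Sigma\cup\{\cent,\$\}$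 (with end-markers $\cent,\$$), $\mathcal{A}_a=M_aU_a$ consists of a unitary $U_a$ followed by a projective measurement $M_a$ (a family of orthogonal projectors summing to the identity), and $M_\$$ is the measurement with respect to the decomposition into the span of $Q_{acc}$ and its orthogonal complement; on input $w$ it processes $\cent w\$$ symbol by symbol (applying $U_a$ then $M_a$) and accepts iff the final measurement yields the accepting subspace; $p_{A'}(w)$ denotes the acceptance probability. An automaton $B$ with acceptance probability $p_B$ recognizes $L$ with cut-point $\lambda$ isolated by $\delta>0$ iff for all words $x$: $x\in L\Leftrightarrow p_B(x)>\lambda$, and $|p_B(x)-\lambda|\ge\delta$. *)

theory Defs
  imports "Jordan_Normal_Form.Schur_Decomposition"
begin

definition mtrace :: "complex mat \<Rightarrow> complex" where
  "mtrace A = (\<Sum>i<dim_row A. A $$ (i, i))"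

definition mat_sum :: "nat \<Rightarrow> ('b \<Rightarrow> complex mat) \<Rightarrow> 'b set \<Rightarrow> complex mat" where
  "mat_sum n f A = mat n n (\<lambda>(i, j). \<Sum>a\<in>A. f a $$ (i, j))"

definition hermitian :: "nat \<Rightarrow> complex mat \<Rightarrow> bool" where
  "hermitian n H \<longleftrightarrow> H \<in> carrier_mat n n \<and> mat_adjoint H = H"

definition unitary :: "nat \<Rightarrow> complex mat \<Rightarrow> bool" where
  "unitary n U \<longleftrightarrow> U \<in> carrier_mat n n \<and> mat_adjoint U * U = 1\<^sub>m n \<and> U * mat_adjoint U = 1\<^sub>m n"

definition orth_proj :: "nat \<Rightarrow> complex mat \<Rightarrow> bool" where
  "orth_proj n P \<longleftrightarrow> hermitian n P \<and> P * P = P"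

text \<open>\<open>observable n Obs V P\<close>: \<open>Obs\<close> is a Hermitian n x n matrix with spectral decomposition
  \<open>Obs = (\<Sum>r\<in>V. r P(r))\<close>, where \<open>V\<close> is its (finite) set of eigenvalues and \<open>P r\<close> the orthogonal
  projector onto the eigenspace of \<open>r\<close>: the \<open>P r\<close> (r in V) are nonzero, pairwise orthogonal
  orthogonal projectors summing to the identity, and the \<open>r\<close> are distinct (V is a set).\<close>
definition observable :: "nat \<Rightarrow> complex mat \<Rightarrow> real set \<Rightarrow> (real \<Rightarrow> complex mat) \<Rightarrow> bool" where
  "observable n Obs V P \<longleftrightarrow>
     hermitian n Obs \<and> finite V \<and>
     (\<forall>r\<in>V. orth_proj n (P r) \<and> P r \<noteq> 0\<^sub>m n n) \<and>
     (\<forall>r\<in>V. \<forall>s\<in>V. r \<noteq> s \<longrightarrow> P r * P s = 0\<^sub>m n n) \<and>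
     mat_sum n P V = 1\<^sub>m n \<and>
     Obs = mat_sum n (\<lambda>r. complex_of_real r \<cdot>\<^sub>m P r) V"

text \<open>The alphabet \<open>\<Sigma> \<union> {#}\<close> is rendered as \<open>'a option\<close>, with \<open>None\<close> playing the role of \<open>#\<close>.
  A MON-1qfa of dimension m is given by: the observables \<open>Obs c\<close> with eigenvalue sets \<open>V c\<close> and
  eigenprojectors \<open>P c r\<close>, the initial (row) vector \<open>pi0\<close>, and the accepting set \<open>F \<subseteq> V(O_#)\<close>.\<close>
definition mon_1qfa ::
  "nat \<Rightarrow> ('a option \<Rightarrow> complex mat) \<Rightarrow> ('a option \<Rightarrow> real set) \<Rightarrow> ('a option \<Rightarrow> real \<Rightarrow> complex mat)
   \<Rightarrow> complex vec \<Rightarrow> real set \<Rightarrow> bool" where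
  "mon_1qfa m Obs V P pi0 F \<longleftrightarrow>
     (\<forall>c. observable m (Obs c) (V c) (P c)) \<and>
     pi0 \<in> carrier_vec m \<and> (\<Sum>i<m. (cmod (pi0 $ i))\<^sup>2) = 1 \<and>
     F \<subseteq> V None"

text \<open>\<open>rho_0 = pi0^\<dagger> pi0\<close> for the row vector \<open>pi0\<close>.\<close>
definition mon_rho0 :: "nat \<Rightarrow> complex vec \<Rightarrow> complex mat" where
  "mon_rho0 m pi0 = mat m m (\<lambda>(i, j). cnj (pi0 $ i) * pi0 $ j)"

definition mon_step :: "nat \<Rightarrow> real set \<Rightarrow> (real \<Rightarrow> complex mat) \<Rightarrow> complex mat \<Rightarrow> complex mat" where
  "mon_step m Vc Pc \<rho> = mat_sum m (\<lambda>r. Pc r * \<rho> * Pc r) Vc"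

definition mon_prob ::
  "nat \<Rightarrow> ('a option \<Rightarrow> real set) \<Rightarrow> ('a option \<Rightarrow> real \<Rightarrow> complex mat)
   \<Rightarrow> complex vec \<Rightarrow> real set \<Rightarrow> 'a list \<Rightarrow> real" where
  "mon_prob m V P pi0 F x =
     (let \<rho>n = foldl (\<lambda>\<rho> a. mon_step m (V (Some a)) (P (Some a)) \<rho>) (mon_rho0 m pi0) x
      in (\<Sum>r\<in>F. Re (mtrace (P None r * \<rho>n))))"

datatype 'a lsym = Sym 'a | Cent | Dollar

definition proj_measurement :: "nat \<Rightarrow> complex mat list \<Rightarrow> bool" where
  "proj_measurement n Ps \<longleftrightarrow>
     (\<forall>k<length Ps. orth_proj n (Ps ! k)) \<and>
     (\<forall>k<length Ps. \<forall>l<length Ps. k \<noteq> l \<longrightarrow> Ps ! k * Ps ! l = 0\<^sub>m n n) \<and>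
     mat_sum n (\<lambda>k. Ps ! k) {..<length Ps} = 1\<^sub>m n"

text \<open>Basis states are \<open>{0..<n}\<close>; projector onto span of the accepting basis states.\<close>
definition acc_proj :: "nat \<Rightarrow> nat set \<Rightarrow> complex mat" where
  "acc_proj n Qacc = mat n n (\<lambda>(i, j). if i = j \<and> i \<in> Qacc then 1 else 0)"

definition latvian ::
  "nat \<Rightarrow> ('a lsym \<Rightarrow> complex mat) \<Rightarrow> ('a lsym \<Rightarrow> complex mat list) \<Rightarrow> nat \<Rightarrow> nat set \<Rightarrow> bool" where
  "latvian n U M q0 Qacc \<longleftrightarrow>
     q0 < n \<and> Qacc \<subseteq> {..<n} \<and>
     (\<forall>a. unitary n (U a)) \<and>
     (\<forall>a. proj_measurement n (M a)) \<and>
     M Dollar = [acc_proj n Qacc, 1\<^sub>m n - acc_proj n Qacc]"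

definition lat_rho0 :: "nat \<Rightarrow> nat \<Rightarrow> complex mat" where
  "lat_rho0 n q0 = mat n n (\<lambda>(i, j). if i = q0 \<and> j = q0 then 1 else 0)"

text \<open>One step \<open>A_a = M_a U_a\<close> on density matrices (outcome not recorded).\<close>
definition lat_step :: "nat \<Rightarrow> complex mat \<Rightarrow> complex mat list \<Rightarrow> complex mat \<Rightarrow> complex mat" where
  "lat_step n Ua Ms \<rho> =
     mat_sum n (\<lambda>k. Ms ! k * (Ua * \<rho> * mat_adjoint Ua) * Ms ! k) {..<length Ms}"

definition lat_prob ::
  "nat \<Rightarrow> ('a lsym \<Rightarrow> complex mat) \<Rightarrow> ('a lsym \<Rightarrow> complex mat list) \<Rightarrow> nat \<Rightarrow> nat set \<Rightarrow> 'a list \<Rightarrow> real" where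
  "lat_prob n U M q0 Qacc w =
     (let \<rho>1 = lat_step n (U Cent) (M Cent) (lat_rho0 n q0);
          \<rho>w = foldl (\<lambda>\<rho> a. lat_step n (U (Sym a)) (M (Sym a)) \<rho>) \<rho>1 w
      in Re (mtrace (acc_proj n Qacc * (U Dollar * \<rho>w * mat_adjoint (U Dollar)))))"

end

theory Submission
  imports Defs
begin

text \<open>
  The Latvian automaton works on \<open>2m + 1\<close> basis states: the first \<open>m\<close> carry the density matrix
  of \<open>A\<close> scaled by a weight \<open>t\<close>, the last one carries the remaining weight \<open>1 - t\<close>, and the
  \<open>m\<close> states in between are only used at the end.  On \<open>\<cent>\<close> a Householder reflection prepares
  \<open>\<surd>t \<pi>\<^sub>0\<^sup>\<dagger> + \<surd>(1-t) e\<^sub>2\<^sub>m\<close> and a measurement separates the two parts, after which each letter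
  \<open>c\<close> is simulated by measuring the eigenprojectors of \<open>O\<^sub>c\<close> on the first block.  On \<open>$\<close> the
  involution \<open>[[P\<^sub>F, 1 - P\<^sub>F], [1 - P\<^sub>F, P\<^sub>F]]\<close>, where \<open>P\<^sub>F = \<Sum>\<^sub>r\<^sub>\<in>\<^sub>F P\<^sub>#(r)\<close>, moves the \<open>P\<^sub>F\<close>-part of the state onto the first
  block, so accepting on the first block, together with the last state when \<open>\<lambda> < 1/2\<close>, gives
  \<open>p\<^sub>A\<^sub>'(x) = t p\<^sub>A(x) + (1 - t)[\<lambda> < 1/2]\<close>.  For \<open>t = 1 / (2 max(\<lambda>, 1 - \<lambda>))\<close> this affine map
  sends \<open>\<lambda>\<close> to \<open>1/2\<close> and multiplies distances by \<open>t\<close>.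
\<close>

lemma mat_adjoint_dim [simp]:
  "dim_row (mat_adjoint A) = dim_col A" "dim_col (mat_adjoint A) = dim_row A"
  unfolding mat_adjoint_def by auto

lemma index_mat_adjoint [simp]:
  "i < dim_col A \<Longrightarrow> j < dim_row A \<Longrightarrow> mat_adjoint A $$ (i, j) = cnj (A $$ (j, i))"
  unfolding mat_adjoint_def by (simp add: mat_of_rows_index)

lemma mat_adjoint_carrier [simp]: "A \<in> carrier_mat a b \<Longrightarrow> mat_adjoint A \<in> carrier_mat b a"
  by (rule carrier_matI) (auto dest: carrier_matD)

lemma mat_adjoint_one [simp]: "mat_adjoint (1\<^sub>m n) = (1\<^sub>m n :: complex mat)"
  by (rule eq_matI) auto

lemma mat_adjoint_zero [simp]: "mat_adjoint (0\<^sub>m a b) = (0\<^sub>m b a :: complex mat)"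
  by (rule eq_matI) auto

lemma mat_adjoint_minus:
  fixes A :: "complex mat"
  assumes "A \<in> carrier_mat a b" "B \<in> carrier_mat a b"
  shows "mat_adjoint (A - B) = mat_adjoint A - mat_adjoint B"
  by (rule eq_matI) (use assms in auto)

lemma mat_adjoint_four_block:
  fixes A :: "complex mat"
  assumes "A \<in> carrier_mat n1 m1" "B \<in> carrier_mat n1 m2" "C \<in> carrier_mat n2 m1" "D \<in> carrier_mat n2 m2"
  shows "mat_adjoint (four_block_mat A B C D) =
    four_block_mat (mat_adjoint A) (mat_adjoint C) (mat_adjoint B) (mat_adjoint D)"
  by (rule eq_matI) (use assms in auto)

lemma index_mult_mat_lessThan:
  "A \<in> carrier_mat n k \<Longrightarrow> B \<in> carrier_mat k m \<Longrightarrow> i < n \<Longrightarrow> j < m \<Longrightarrow>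
   (A * B) $$ (i, j) = (\<Sum>l<k. A $$ (i, l) * B $$ (l, j))"
  by (auto simp: scalar_prod_def atLeast0LessThan)

lemma sum_lessThan_add: "(\<Sum>i<a + b. f i) = (\<Sum>i<a. f i) + (\<Sum>i<b. f (a + i))"
  for f :: "nat \<Rightarrow> 'b::comm_monoid_add"
  by (induct b) (auto simp: add.assoc)

lemma one_by_one_mat_mult [simp]:
  "mat 1 1 (\<lambda>_. a) * mat 1 1 (\<lambda>_. b) = mat 1 1 (\<lambda>_. a * b :: complex)"
  "mat (Suc 0) (Suc 0) (\<lambda>_. a) * mat (Suc 0) (Suc 0) (\<lambda>_. b) = mat (Suc 0) (Suc 0) (\<lambda>_. a * b)"
  by (rule eq_matI, auto simp: scalar_prod_def)+

lemma one_by_one_mat_zero [simp]: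
  "mat 1 1 (\<lambda>_. 0) = (0\<^sub>m 1 1 :: complex mat)"
  "mat (Suc 0) (Suc 0) (\<lambda>_. 0) = (0\<^sub>m (Suc 0) (Suc 0) :: complex mat)"
  by (rule eq_matI, auto)+

lemma four_block_diag_mult_left:
  fixes a :: "complex mat"
  assumes "a \<in> carrier_mat k k" "d \<in> carrier_mat l l" "dim_row p = k" "dim_row q = k"
    "dim_row r = l" "dim_row s = l" "dim_col r = dim_col p" "dim_col s = dim_col q"
  shows "four_block_mat a (0\<^sub>m k l) (0\<^sub>m l k) d * four_block_mat p q r s =
    four_block_mat (a * p) (a * q) (d * r) (d * s)"
  by (subst mult_four_block_mat[of _ k k _ l _ l _ _ "dim_col p" _ "dim_col q"])
    (use assms in \<open>auto intro!: carrier_matI\<close>)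

lemma four_block_diag_mult_right:
  fixes a :: "complex mat"
  assumes "a \<in> carrier_mat k k" "d \<in> carrier_mat l l" "dim_col p = k" "dim_col q = l"
    "dim_col r = k" "dim_col s = l" "dim_row q = dim_row p" "dim_row s = dim_row r"
  shows "four_block_mat p q r s * four_block_mat a (0\<^sub>m k l) (0\<^sub>m l k) d =
    four_block_mat (p * a) (q * d) (r * a) (s * d)"
  by (subst mult_four_block_mat[of _ "dim_row p" k _ l _ "dim_row r" _ _ k _ l])
    (use assms in \<open>auto intro!: carrier_matI\<close>)

lemma proj_complement:
  fixes P :: "complex mat"
  assumes "P \<in> carrier_mat n n" "P * P = P"
  shows "(1\<^sub>m n - P) * (1\<^sub>m n - P) = 1\<^sub>m n - P" "P * (1\<^sub>m n - P) = 0\<^sub>m n n"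
    "(1\<^sub>m n - P) * P = 0\<^sub>m n n"
proof -
  show left: "P * (1\<^sub>m n - P) = 0\<^sub>m n n"
    using assms by (subst mult_minus_distrib_mat[of _ n n]) (auto intro: eq_matI)
  show right: "(1\<^sub>m n - P) * P = 0\<^sub>m n n"
    using assms by (subst minus_mult_distrib_mat[of _ n n]) (auto intro: eq_matI)
  show "(1\<^sub>m n - P) * (1\<^sub>m n - P) = 1\<^sub>m n - P"
    using assms left by (subst minus_mult_distrib_mat[of _ n n]) (auto intro: eq_matI)
qed

lemma mat_sum_carrier [simp]:
  "dim_row (mat_sum n f A) = n" "dim_col (mat_sum n f A) = n" "mat_sum n f A \<in> carrier_mat n n"
  unfolding mat_sum_def by auto

lemma index_mat_sum [simp]:
  "i < n \<Longrightarrow> j < n \<Longrightarrow> mat_sum n f A $$ (i, j) = (\<Sum>a\<in>A. f a $$ (i, j))"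
  unfolding mat_sum_def by auto

lemma mat_sum_cong: "(\<And>a. a \<in> I \<Longrightarrow> f a = g a) \<Longrightarrow> mat_sum n f I = mat_sum n g I"
  unfolding mat_sum_def by (auto intro!: cong_mat sum.cong)

lemma mat_sum_singleton: "f a \<in> carrier_mat n n \<Longrightarrow> mat_sum n f {a} = f a"
  by (rule eq_matI) auto

lemma mat_sum_mult:
  assumes "X \<in> carrier_mat n n" "\<And>a. a \<in> I \<Longrightarrow> f a \<in> carrier_mat n n"
  shows "mat_sum n f I * X = mat_sum n (\<lambda>a. f a * X) I"
proof (rule eq_matI)
  fix i j assume "i < dim_row (mat_sum n (\<lambda>a. f a * X) I)" "j < dim_col (mat_sum n (\<lambda>a. f a * X) I)"
  then have ij: "i < n" "j < n" by auto
  have "(mat_sum n f I * X) $$ (i, j) = (\<Sum>k<n. (\<Sum>a\<in>I. f a $$ (i, k)) * X $$ (k, j))"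
    using ij assms by (subst index_mult_mat_lessThan[of _ n n _ n]) auto
  also have "\<dots> = (\<Sum>a\<in>I. \<Sum>k<n. f a $$ (i, k) * X $$ (k, j))"
    by (simp add: sum_distrib_right sum.swap[of _ "{..<n}"])
  also have "\<dots> = mat_sum n (\<lambda>a. f a * X) I $$ (i, j)"
    using ij assms by (simp add: index_mult_mat_lessThan[of _ n n _ n])
  finally show "(mat_sum n f I * X) $$ (i, j) = mat_sum n (\<lambda>a. f a * X) I $$ (i, j)" .
qed (use assms in auto)

lemma mult_mat_sum:
  assumes "X \<in> carrier_mat n n" "\<And>a. a \<in> I \<Longrightarrow> f a \<in> carrier_mat n n"
  shows "X * mat_sum n f I = mat_sum n (\<lambda>a. X * f a) I"
proof (rule eq_matI)
  fix i j assume "i < dim_row (mat_sum n (\<lambda>a. X * f a) I)" "j < dim_col (mat_sum n (\<lambda>a. X * f a) I)"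
  then have ij: "i < n" "j < n" by auto
  have "(X * mat_sum n f I) $$ (i, j) = (\<Sum>k<n. X $$ (i, k) * (\<Sum>a\<in>I. f a $$ (k, j)))"
    using ij assms by (subst index_mult_mat_lessThan[of _ n n _ n]) auto
  also have "\<dots> = (\<Sum>a\<in>I. \<Sum>k<n. X $$ (i, k) * f a $$ (k, j))"
    by (simp add: sum_distrib_left sum.swap[of _ "{..<n}"])
  also have "\<dots> = mat_sum n (\<lambda>a. X * f a) I $$ (i, j)"
    using ij assms by (simp add: index_mult_mat_lessThan[of _ n n _ n])
  finally show "(X * mat_sum n f I) $$ (i, j) = mat_sum n (\<lambda>a. X * f a) I $$ (i, j)" .
qed (use assms in auto)

lemma mat_sum_smult:
  assumes "\<And>a. a \<in> I \<Longrightarrow> f a \<in> carrier_mat n n"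
  shows "mat_sum n (\<lambda>a. c \<cdot>\<^sub>m f a) I = c \<cdot>\<^sub>m mat_sum n f I"
proof -
  have "dim_row (f a) = n" "dim_col (f a) = n" if "a \<in> I" for a
    using assms[OF that] by auto
  then show ?thesis by (intro eq_matI) (auto simp: sum_distrib_left intro!: sum.cong)
qed

lemma mat_adjoint_mat_sum:
  assumes "\<And>a. a \<in> I \<Longrightarrow> f a \<in> carrier_mat n n"
  shows "mat_adjoint (mat_sum n f I) = mat_sum n (\<lambda>a. mat_adjoint (f a)) I"
proof -
  have "dim_row (f a) = n" "dim_col (f a) = n" if "a \<in> I" for a
    using assms[OF that] by auto
  then show ?thesis by (intro eq_matI) (auto intro!: sum.cong)
qed

lemma mat_sum_map_append_two:
  assumes "distinct rs" "h z1 \<in> carrier_mat n n" "h z2 \<in> carrier_mat n n"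
  shows "mat_sum n (\<lambda>k. h ((map f rs @ [z1, z2]) ! k)) {..<length (map f rs @ [z1, z2])}
       = mat_sum n (\<lambda>r. h (f r)) (set rs) + h z1 + h z2"
proof (rule eq_matI)
  fix i j assume "i < dim_row (mat_sum n (\<lambda>r. h (f r)) (set rs) + h z1 + h z2)"
    "j < dim_col (mat_sum n (\<lambda>r. h (f r)) (set rs) + h z1 + h z2)"
  then have ij: "i < n" "j < n" using assms by auto
  let ?xs = "map f rs @ [z1, z2]"
  have "(\<Sum>k<length ?xs. h (?xs ! k) $$ (i, j)) =
     (\<Sum>k<length rs. h (?xs ! k) $$ (i, j)) + h z1 $$ (i, j) + h z2 $$ (i, j)"
    by (simp add: nth_append)
  also have "(\<Sum>k<length rs. h (?xs ! k) $$ (i, j)) = (\<Sum>k<length rs. h (f (rs ! k)) $$ (i, j))"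
    by (rule sum.cong) (auto simp: nth_append)
  also have "\<dots> = (\<Sum>r\<in>set rs. h (f r) $$ (i, j))"
    by (rule sum.reindex_bij_betw[of "(!) rs", where g = "\<lambda>r. h (f r) $$ (i, j)"], rule bij_betw_nth)
      (use assms in auto)
  finally show "mat_sum n (\<lambda>k. h (?xs ! k)) {..<length ?xs} $$ (i, j) =
      (mat_sum n (\<lambda>r. h (f r)) (set rs) + h z1 + h z2) $$ (i, j)"
    using ij assms by simp
qed (use assms in auto)

lemma mtrace_zero [simp]: "mtrace (0\<^sub>m n n) = 0"
  unfolding mtrace_def by simp

lemma mtrace_one_by_one [simp]: "mtrace (mat (Suc 0) (Suc 0) (\<lambda>_. z)) = z"
  unfolding mtrace_def by simp

lemma mtrace_four_block:
  assumes "A \<in> carrier_mat n1 n1" "D \<in> carrier_mat n2 n2"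
  shows "mtrace (four_block_mat A B C D) = mtrace A + mtrace D"
  using assms unfolding mtrace_def by (simp add: sum_lessThan_add)

lemma mtrace_mult_comm:
  assumes "A \<in> carrier_mat a b" "B \<in> carrier_mat b a"
  shows "mtrace (A * B) = mtrace (B * A)"
  using assms unfolding mtrace_def
  by (simp add: scalar_prod_def sum.swap[of _ "{..<a}"] mult.commute atLeast0LessThan)

lemma mtrace_smult: "A \<in> carrier_mat n n \<Longrightarrow> mtrace (c \<cdot>\<^sub>m A) = c * mtrace A"
  unfolding mtrace_def by (auto simp: sum_distrib_left intro!: sum.cong)

lemma mtrace_mat_sum:
  assumes "\<And>a. a \<in> I \<Longrightarrow> f a \<in> carrier_mat n n"
  shows "mtrace (mat_sum n f I) = (\<Sum>a\<in>I. mtrace (f a))"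
proof -
  have "\<And>a. a \<in> I \<Longrightarrow> dim_row (f a) = n" using assms by auto
  then show ?thesis unfolding mtrace_def by (simp add: sum.swap[of _ "{..<n}"])
qed

definition proj_family :: "nat \<Rightarrow> ('b \<Rightarrow> complex mat) \<Rightarrow> 'b set \<Rightarrow> bool" where
  "proj_family m Q I \<longleftrightarrow>
     (\<forall>r\<in>I. Q r \<in> carrier_mat m m \<and> mat_adjoint (Q r) = Q r \<and> Q r * Q r = Q r) \<and>
     (\<forall>r\<in>I. \<forall>s\<in>I. r \<noteq> s \<longrightarrow> Q r * Q s = 0\<^sub>m m m) \<and> mat_sum m Q I = 1\<^sub>m m"

lemma proj_family_carrier: "proj_family m Q I \<Longrightarrow> r \<in> I \<Longrightarrow> Q r \<in> carrier_mat m m"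
  unfolding proj_family_def by auto

lemma proj_family_if_observable:
  "observable m Ob V P \<Longrightarrow> proj_family m P V"
  unfolding observable_def proj_family_def orth_proj_def hermitian_def by auto

lemma proj_family_singleton: "proj_family m (\<lambda>_. 1\<^sub>m m) {a}"
  unfolding proj_family_def by (auto simp: mat_sum_singleton)

lemma proj_family_sum_subset:
  assumes "proj_family m P V" "F \<subseteq> V" "finite V"
  shows "mat_adjoint (mat_sum m P F) = mat_sum m P F"
    "mat_sum m P F * mat_sum m P F = mat_sum m P F"
proof -
  have P: "\<And>r. r \<in> F \<Longrightarrow> P r \<in> carrier_mat m m" "\<And>r. r \<in> F \<Longrightarrow> mat_adjoint (P r) = P r"
    "\<And>r. r \<in> F \<Longrightarrow> P r * P r = P r"
    "\<And>r s. r \<in> F \<Longrightarrow> s \<in> F \<Longrightarrow> r \<noteq> s \<Longrightarrow> P r * P s = 0\<^sub>m m m"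
    using assms unfolding proj_family_def by auto
  have fin: "finite F" using assms(2,3) finite_subset by auto
  show "mat_adjoint (mat_sum m P F) = mat_sum m P F"
    using P by (simp add: mat_adjoint_mat_sum cong: mat_sum_cong)
  have absorb: "mat_sum m (\<lambda>s. P r * P s) F = P r" if r: "r \<in> F" for r
  proof (rule eq_matI)
    fix i j assume "i < dim_row (P r)" "j < dim_col (P r)"
    then have ij: "i < m" "j < m" using P(1)[OF r] by auto
    have "(\<Sum>s\<in>F. (P r * P s) $$ (i, j)) =
        (P r * P r) $$ (i, j) + (\<Sum>s\<in>F - {r}. (P r * P s) $$ (i, j))"
      by (rule sum.remove[OF fin r])
    also have "(\<Sum>s\<in>F - {r}. (P r * P s) $$ (i, j)) = 0"
      using P(4)[OF r] ij by (intro sum.neutral) (metis DiffE index_zero_mat(1) insertI1)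
    finally show "mat_sum m (\<lambda>s. P r * P s) F $$ (i, j) = P r $$ (i, j)"
      using ij P(3)[OF r] by simp
  qed (use P(1)[OF that] in auto)
  have "mat_sum m P F * mat_sum m P F = mat_sum m (\<lambda>r. P r * mat_sum m P F) F"
    using P by (intro mat_sum_mult) auto
  also have "\<dots> = mat_sum m (\<lambda>r. mat_sum m (\<lambda>s. P r * P s) F) F"
    using P by (intro mat_sum_cong mult_mat_sum) auto
  also have "\<dots> = mat_sum m P F"
    using absorb by (intro mat_sum_cong) auto
  finally show "mat_sum m P F * mat_sum m P F = mat_sum m P F" .
qed

section \<open>Block matrices on \<open>\<complex>\<^sup>m \<oplus> \<complex>\<^sup>m \<oplus> \<complex>\<close>\<close>

text \<open>\<open>bordered m X B C y\<close> is \<open>[[X, 0, B\<^sub>1], [0, 0, B\<^sub>2], [C\<^sub>1, C\<^sub>2, y]]\<close>.\<close>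
definition bordered :: "nat \<Rightarrow> complex mat \<Rightarrow> complex mat \<Rightarrow> complex mat \<Rightarrow> complex \<Rightarrow> complex mat" where
  "bordered m X B C y =
     four_block_mat (four_block_mat X (0\<^sub>m m m) (0\<^sub>m m m) (0\<^sub>m m m)) B C (mat 1 1 (\<lambda>_. y))"

definition block_diag :: "nat \<Rightarrow> complex mat \<Rightarrow> complex \<Rightarrow> complex mat" where
  "block_diag m X y = bordered m X (0\<^sub>m (m+m) 1) (0\<^sub>m 1 (m+m)) y"

definition aux_proj :: "nat \<Rightarrow> complex mat" where
  "aux_proj m = four_block_mat (four_block_mat (0\<^sub>m m m) (0\<^sub>m m m) (0\<^sub>m m m) (1\<^sub>m m))
     (0\<^sub>m (m+m) 1) (0\<^sub>m 1 (m+m)) (0\<^sub>m 1 1)"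

lemma bordered_carrier [simp]:
  "X \<in> carrier_mat m m \<Longrightarrow> bordered m X B C y \<in> carrier_mat (m+m+1) (m+m+1)"
  "X \<in> carrier_mat m m \<Longrightarrow> bordered m X B C y \<in> carrier_mat (Suc (m+m)) (Suc (m+m))"
  unfolding bordered_def by (rule four_block_carrier_mat, auto)+

lemma bordered_dim [simp]:
  "X \<in> carrier_mat m m \<Longrightarrow> dim_row (bordered m X B C y) = Suc (m+m)"
  "X \<in> carrier_mat m m \<Longrightarrow> dim_col (bordered m X B C y) = Suc (m+m)"
  unfolding bordered_def by auto

lemma block_diag_carrier [simp]:
  "X \<in> carrier_mat m m \<Longrightarrow> block_diag m X y \<in> carrier_mat (m+m+1) (m+m+1)"
  "X \<in> carrier_mat m m \<Longrightarrow> block_diag m X y \<in> carrier_mat (Suc (m+m)) (Suc (m+m))"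
  unfolding block_diag_def by simp_all

lemma block_diag_dim [simp]:
  "X \<in> carrier_mat m m \<Longrightarrow> dim_row (block_diag m X y) = Suc (m+m)"
  "X \<in> carrier_mat m m \<Longrightarrow> dim_col (block_diag m X y) = Suc (m+m)"
  unfolding block_diag_def by simp_all

lemma aux_proj_carrier [simp]:
  "aux_proj m \<in> carrier_mat (m+m+1) (m+m+1)" "aux_proj m \<in> carrier_mat (Suc (m+m)) (Suc (m+m))"
  unfolding aux_proj_def by (rule four_block_carrier_mat, auto)+

lemma index_bordered:
  assumes "X \<in> carrier_mat m m" "B \<in> carrier_mat (m+m) 1" "C \<in> carrier_mat 1 (m+m)"
    "i < m+m+1" "j < m+m+1"
  shows "bordered m X B C y $$ (i, j) =
    (if i < m+m then (if j < m+m then (if i < m \<and> j < m then X $$ (i, j) else 0) else B $$ (i, 0))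
     else (if j < m+m then C $$ (0, j) else y))"
  using assms unfolding bordered_def by auto

lemma index_block_diag:
  assumes "X \<in> carrier_mat m m" "i < m+m+1" "j < m+m+1"
  shows "block_diag m X y $$ (i, j) =
    (if i < m \<and> j < m then X $$ (i, j) else if i = m+m \<and> j = m+m then y else 0)"
  using assms unfolding block_diag_def by (simp add: index_bordered)

lemma block_diag_mult:
  assumes "A \<in> carrier_mat m m" "B \<in> carrier_mat m m"
  shows "block_diag m A a * block_diag m B b = block_diag m (A * B) (a * b)"
  using assms unfolding block_diag_def bordered_def by (simp add: four_block_diag_mult_left)

lemma block_diag_adjoint:
  "X \<in> carrier_mat m m \<Longrightarrow> mat_adjoint (block_diag m X y) = block_diag m (mat_adjoint X) (cnj y)"
  by (rule eq_matI) (auto simp: index_block_diag)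

lemma block_diag_add:
  assumes "A \<in> carrier_mat m m" "B \<in> carrier_mat m m"
  shows "block_diag m A a + block_diag m B b = block_diag m (A + B) (a + b)"
  by (rule eq_matI) (use assms in \<open>auto simp: index_block_diag\<close>)

lemma block_diag_zero: "block_diag m (0\<^sub>m m m) 0 = 0\<^sub>m (m+m+1) (m+m+1)"
  by (rule eq_matI) (auto simp: index_block_diag)

lemma mat_sum_block_diag:
  assumes "\<And>a. a \<in> I \<Longrightarrow> f a \<in> carrier_mat m m"
  shows "mat_sum (m+m+1) (\<lambda>a. block_diag m (f a) (g a)) I = block_diag m (mat_sum m f I) (\<Sum>a\<in>I. g a)"
proof (rule eq_matI)
  fix i j
  assume "i < dim_row (block_diag m (mat_sum m f I) (sum g I))"
    "j < dim_col (block_diag m (mat_sum m f I) (sum g I))"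
  then have "i < m+m+1" "j < m+m+1"
    using carrier_matD[OF block_diag_carrier(1)[OF mat_sum_carrier(3)]] by auto
  then show "mat_sum (m+m+1) (\<lambda>a. block_diag m (f a) (g a)) I $$ (i, j) =
      block_diag m (mat_sum m f I) (sum g I) $$ (i, j)"
    using assms by (auto simp: index_block_diag cong: sum.cong)
qed auto

lemma block_diag_aux_proj_partition:
  "block_diag m (1\<^sub>m m) 0 + aux_proj m + block_diag m (0\<^sub>m m m) 1 = 1\<^sub>m (m+m+1)"
  by (rule eq_matI) (auto simp: index_block_diag aux_proj_def)

lemma aux_proj_idem: "aux_proj m * aux_proj m = aux_proj m"
  unfolding aux_proj_def by (simp add: four_block_diag_mult_left)

lemma aux_proj_adjoint: "mat_adjoint (aux_proj m) = aux_proj m"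
  by (rule eq_matI) (auto simp: aux_proj_def)

lemma aux_proj_block_diag:
  assumes "X \<in> carrier_mat m m"
  shows "aux_proj m * block_diag m X y = 0\<^sub>m (m+m+1) (m+m+1)"
    "block_diag m X y * aux_proj m = 0\<^sub>m (m+m+1) (m+m+1)"
  using assms unfolding aux_proj_def block_diag_def bordered_def
  by (simp_all add: four_block_diag_mult_left four_block_diag_mult_right carrier_matD)

lemma block_diag_compress_bordered:
  assumes "Q \<in> carrier_mat m m" "X \<in> carrier_mat m m" "B \<in> carrier_mat (m+m) 1" "C \<in> carrier_mat 1 (m+m)"
  shows "block_diag m Q 0 * bordered m X B C y * block_diag m Q 0 = block_diag m (Q * X * Q) 0"
    "block_diag m (0\<^sub>m m m) 1 * bordered m X B C y * block_diag m (0\<^sub>m m m) 1 = block_diag m (0\<^sub>m m m) y"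
    "aux_proj m * bordered m X B C y * aux_proj m = block_diag m (0\<^sub>m m m) 0"
  using assms unfolding block_diag_def bordered_def aux_proj_def
  by (simp_all add: four_block_diag_mult_left four_block_diag_mult_right carrier_matD)

section \<open>Simulating a measurement on the first block\<close>

definition sim_meas :: "nat \<Rightarrow> ('b \<Rightarrow> complex mat) \<Rightarrow> 'b list \<Rightarrow> complex mat list" where
  "sim_meas m Q rs = map (\<lambda>r. block_diag m (Q r) 0) rs @ [aux_proj m, block_diag m (0\<^sub>m m m) 1]"

lemma length_sim_meas: "length (sim_meas m Q rs) = Suc (Suc (length rs))"
  unfolding sim_meas_def by simp

lemma nth_sim_meas:
  "k < length (sim_meas m Q rs) \<Longrightarrow> sim_meas m Q rs ! k =
   (if k < length rs then block_diag m (Q (rs ! k)) 0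
    else if k = length rs then aux_proj m else block_diag m (0\<^sub>m m m) 1)"
  unfolding sim_meas_def by (auto simp: nth_append less_Suc_eq)

lemma orth_proj_sim_meas:
  assumes "proj_family m Q (set rs)" "k < length (sim_meas m Q rs)"
  shows "orth_proj (m+m+1) (sim_meas m Q rs ! k)"
proof -
  consider (proj) "k < length rs" | (aux) "k = length rs" | (last) "k = Suc (length rs)"
    using assms(2) unfolding length_sim_meas less_Suc_eq by blast
  then show ?thesis
  proof cases
    case proj
    then have "rs ! k \<in> set rs" by simp
    with assms(1) have "Q (rs ! k) \<in> carrier_mat m m" "mat_adjoint (Q (rs ! k)) = Q (rs ! k)"
      "Q (rs ! k) * Q (rs ! k) = Q (rs ! k)"
      unfolding proj_family_def by auto
    with proj show ?thesis
      by (simp add: nth_sim_meas[OF assms(2)] orth_proj_def hermitian_def block_diag_adjoint block_diag_mult)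
  next
    case aux
    show ?thesis unfolding nth_sim_meas[OF assms(2)] using aux
      by (simp add: orth_proj_def hermitian_def aux_proj_idem aux_proj_adjoint)
  next
    case last
    show ?thesis unfolding nth_sim_meas[OF assms(2)] using last
      by (simp add: orth_proj_def hermitian_def block_diag_adjoint block_diag_mult)
  qed
qed

lemma sim_meas_orthogonal:
  assumes "distinct rs" "proj_family m Q (set rs)"
    "k < length (sim_meas m Q rs)" "l < length (sim_meas m Q rs)" "k \<noteq> l"
  shows "sim_meas m Q rs ! k * sim_meas m Q rs ! l = 0\<^sub>m (m+m+1) (m+m+1)"
proof -
  have Q: "\<And>k. k < length rs \<Longrightarrow> Q (rs ! k) \<in> carrier_mat m m \<and>
      Q (rs ! k) * 0\<^sub>m m m = 0\<^sub>m m m \<and> 0\<^sub>m m m * Q (rs ! k) = 0\<^sub>m m m"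
    "\<And>r s. r \<in> set rs \<Longrightarrow> s \<in> set rs \<Longrightarrow> r \<noteq> s \<Longrightarrow> Q r * Q s = 0\<^sub>m m m"
    using assms(2) unfolding proj_family_def by auto (meson nth_mem right_mult_zero_mat left_mult_zero_mat)+
  have "k < Suc (Suc (length rs))" "l < Suc (Suc (length rs))"
    using assms(3,4) by (simp_all add: length_sim_meas)
  moreover have "rs ! k \<noteq> rs ! l" if "k < length rs" "l < length rs"
    using that assms(1,5) by (simp add: nth_eq_iff_index_eq)
  ultimately show ?thesis
    unfolding nth_sim_meas[OF assms(3)] nth_sim_meas[OF assms(4)] using assms(5) Q
    by (auto simp: less_Suc_eq block_diag_mult block_diag_zero aux_proj_block_diag)
qed

lemma proj_measurement_sim_meas:
  assumes "distinct rs" "proj_family m Q (set rs)"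
  shows "proj_measurement (m+m+1) (sim_meas m Q rs)"
proof -
  have Q: "\<And>r. r \<in> set rs \<Longrightarrow> Q r \<in> carrier_mat m m" "mat_sum m Q (set rs) = 1\<^sub>m m"
    using assms(2) unfolding proj_family_def by auto
  have "mat_sum (m+m+1) (\<lambda>k. sim_meas m Q rs ! k) {..<length (sim_meas m Q rs)} =
      mat_sum (m+m+1) (\<lambda>r. block_diag m (Q r) 0) (set rs) + aux_proj m + block_diag m (0\<^sub>m m m) 1"
    unfolding sim_meas_def using mat_sum_map_append_two[OF assms(1), where h = "\<lambda>M. M"] by simp
  also have "\<dots> = 1\<^sub>m (m+m+1)"
    using Q mat_sum_block_diag[of "set rs" Q m "\<lambda>_. 0"] block_diag_aux_proj_partition[of m] by simp
  finally show ?thesis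
    unfolding proj_measurement_def
    using orth_proj_sim_meas[OF assms(2)] sim_meas_orthogonal[OF assms] by blast
qed

text \<open>All projectors of \<open>sim_meas\<close> are block diagonal, so the measurement erases the border.\<close>
lemma lat_step_sim_meas:
  assumes "distinct rs" "\<And>r. r \<in> set rs \<Longrightarrow> Q r \<in> carrier_mat m m"
    "U * \<rho> * mat_adjoint U = bordered m X B C y"
    "X \<in> carrier_mat m m" "B \<in> carrier_mat (m+m) 1" "C \<in> carrier_mat 1 (m+m)"
  shows "lat_step (m+m+1) U (sim_meas m Q rs) \<rho> = block_diag m (mat_sum m (\<lambda>r. Q r * X * Q r) (set rs)) y"
proof -
  let ?R = "bordered m X B C y"
  have QXQ: "\<And>r. r \<in> set rs \<Longrightarrow> Q r * X * Q r \<in> carrier_mat m m"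
    using assms(2,4) by (meson mult_carrier_mat)
  have "lat_step (m+m+1) U (sim_meas m Q rs) \<rho> =
      mat_sum (m+m+1) (\<lambda>k. sim_meas m Q rs ! k * ?R * sim_meas m Q rs ! k) {..<length (sim_meas m Q rs)}"
    unfolding lat_step_def assms(3) ..
  also have "\<dots> = mat_sum (m+m+1) (\<lambda>r. block_diag m (Q r) 0 * ?R * block_diag m (Q r) 0) (set rs)
     + aux_proj m * ?R * aux_proj m + block_diag m (0\<^sub>m m m) 1 * ?R * block_diag m (0\<^sub>m m m) 1"
    unfolding sim_meas_def using assms(4-6)
    by (subst mat_sum_map_append_two[OF assms(1), where h = "\<lambda>M. M * ?R * M"])
      (simp_all add: block_diag_compress_bordered)
  also have "\<dots> = mat_sum (m+m+1) (\<lambda>r. block_diag m (Q r * X * Q r) 0) (set rs)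
      + block_diag m (0\<^sub>m m m) 0 + block_diag m (0\<^sub>m m m) y"
    using assms by (simp add: block_diag_compress_bordered cong: mat_sum_cong)
  also have "\<dots> = block_diag m (mat_sum m (\<lambda>r. Q r * X * Q r) (set rs)) y"
    using mat_sum_block_diag[of "set rs" "\<lambda>r. Q r * X * Q r" m "\<lambda>_. 0", OF QXQ]
    by (simp add: block_diag_add)
  finally show ?thesis .
qed

lemma acc_proj_eq_block_diag:
  "acc_proj (m+m+1) ({..<m} \<union> (if b then {m+m} else {})) = block_diag m (1\<^sub>m m) (if b then 1 else 0)"
  by (rule eq_matI) (auto simp: acc_proj_def index_block_diag)

lemma proj_measurement_accept:
  assumes "\<beta> = 0 \<or> \<beta> = 1"
  shows "proj_measurement (m+m+1) [block_diag m (1\<^sub>m m) \<beta>, 1\<^sub>m (m+m+1) - block_diag m (1\<^sub>m m) \<beta>]"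
proof -
  let ?n = "m+m+1" and ?A = "block_diag m (1\<^sub>m m) \<beta>"
  have A: "?A \<in> carrier_mat ?n ?n" "mat_adjoint ?A = ?A" "?A * ?A = ?A"
    using assms by (auto simp: block_diag_adjoint block_diag_mult)
  have "mat_adjoint (1\<^sub>m ?n - ?A) = 1\<^sub>m ?n - ?A"
    using A by (simp add: mat_adjoint_minus[of _ ?n ?n])
  moreover have "mat_sum ?n (\<lambda>k. [?A, 1\<^sub>m ?n - ?A] ! k) {..<length [?A, 1\<^sub>m ?n - ?A]} = 1\<^sub>m ?n"
    by (rule eq_matI) (use A in \<open>auto simp: numeral_2_eq_2 lessThan_Suc\<close>)
  ultimately show ?thesis
    unfolding proj_measurement_def using A proj_complement[OF A(1) A(3)]
    by (auto simp: orth_proj_def hermitian_def less_Suc_eq numeral_2_eq_2)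
qed

section \<open>The unitaries\<close>

text \<open>The involution \<open>[[P, 1 - P], [1 - P, P]] \<oplus> 1\<close>: for a projector \<open>P\<close> on the first block it
  fixes \<open>ran P\<close> and moves \<open>ker P\<close> into the auxiliary block.\<close>
definition proj_swap :: "nat \<Rightarrow> complex mat \<Rightarrow> complex mat" where
  "proj_swap m P = four_block_mat (four_block_mat P (1\<^sub>m m - P) (1\<^sub>m m - P) P)
     (0\<^sub>m (m+m) 1) (0\<^sub>m 1 (m+m)) (1\<^sub>m 1)"

lemma proj_swap_carrier [simp]:
  "P \<in> carrier_mat m m \<Longrightarrow> proj_swap m P \<in> carrier_mat (m+m+1) (m+m+1)"
  "P \<in> carrier_mat m m \<Longrightarrow> proj_swap m P \<in> carrier_mat (Suc (m+m)) (Suc (m+m))"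
  unfolding proj_swap_def by (rule four_block_carrier_mat, auto)+

lemma proj_swap_adjoint:
  assumes "P \<in> carrier_mat m m" "mat_adjoint P = P"
  shows "mat_adjoint (proj_swap m P) = proj_swap m P"
proof -
  have "mat_adjoint (four_block_mat P (1\<^sub>m m - P) (1\<^sub>m m - P) P) = four_block_mat P (1\<^sub>m m - P) (1\<^sub>m m - P) P"
    using assms by (subst mat_adjoint_four_block[of _ m m _ m _ m]) (auto simp: mat_adjoint_minus[of _ m m])
  with assms show ?thesis
    unfolding proj_swap_def by (subst mat_adjoint_four_block[of _ "m+m" "m+m" _ 1 _ 1]) auto
qed

lemma proj_swap_square:
  assumes "P \<in> carrier_mat m m" "P * P = P"
  shows "proj_swap m P * proj_swap m P = 1\<^sub>m (m+m+1)"
proof -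
  have "four_block_mat P (1\<^sub>m m - P) (1\<^sub>m m - P) P * four_block_mat P (1\<^sub>m m - P) (1\<^sub>m m - P) P
     = four_block_mat (1\<^sub>m m) (0\<^sub>m m m) (0\<^sub>m m m) (1\<^sub>m m)"
    by (subst mult_four_block_mat[of _ m m _ m _ m _ _ m _ m])
      (use assms proj_complement[OF assms] in \<open>auto intro!: eq_matI\<close>)
  then show ?thesis unfolding proj_swap_def using assms by (simp add: four_block_diag_mult_left)
qed

lemma mtrace_accept_proj_swap:
  assumes "P \<in> carrier_mat m m" "P * P = P" "X \<in> carrier_mat m m"
  shows "mtrace (block_diag m (1\<^sub>m m) \<beta> * (proj_swap m P * block_diag m X y * proj_swap m P)) =
    mtrace (P * X) + \<beta> * y"
proof -
  let ?P' = "1\<^sub>m m - P"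
  have P': "?P' \<in> carrier_mat m m" using assms by auto
  have inner: "four_block_mat (P * X) (0\<^sub>m m m) (Q * X) (0\<^sub>m m m) * four_block_mat P Q Q P
      = four_block_mat (P * (X * P)) (P * (X * Q)) (Q * (X * P)) (Q * (X * Q))"
    if "Q \<in> carrier_mat m m" for Q
    by (subst mult_four_block_mat[of _ m m _ m _ m _ _ m _ m]) (use assms that in auto)
  have "proj_swap m P * block_diag m X y * proj_swap m P =
      four_block_mat (four_block_mat (P * X * P) (P * X * ?P') (?P' * X * P) (?P' * X * ?P'))
        (0\<^sub>m (m+m) 1) (0\<^sub>m 1 (m+m)) (mat 1 1 (\<lambda>_. y))"
    unfolding proj_swap_def block_diag_def bordered_def using assms P'
    by (simp add: four_block_diag_mult_left four_block_diag_mult_right inner[OF P'])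
  then have "mtrace (block_diag m (1\<^sub>m m) \<beta> * (proj_swap m P * block_diag m X y * proj_swap m P)) =
      mtrace (P * X * P) + \<beta> * y"
    unfolding block_diag_def bordered_def using assms P'
    by (simp add: four_block_diag_mult_left mtrace_four_block[of _ "m+m" _ 1] mtrace_four_block[of _ m _ m])
  also have "mtrace (P * X * P) = mtrace (P * (P * X))"
    using assms by (intro mtrace_mult_comm[of _ m m]) auto
  also have "\<dots> = mtrace (P * X)"
    using assms by (simp add: assoc_mult_mat[symmetric, of _ m m _ m _ m])
  finally show ?thesis .
qed

definition householder :: "nat \<Rightarrow> complex \<Rightarrow> (nat \<Rightarrow> complex) \<Rightarrow> complex mat" where
  "householder n a u = mat n n (\<lambda>(i, j). (if i = j then 1 else 0) - a * u i * cnj (u j))"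

lemma householder_square:
  assumes "a * a * (\<Sum>k<n. u k * cnj (u k)) = 2 * a"
  shows "householder n a u * householder n a u = 1\<^sub>m n"
proof (rule eq_matI)
  fix i j assume "i < dim_row (1\<^sub>m n :: complex mat)" "j < dim_col (1\<^sub>m n :: complex mat)"
  then have ij: "i < n" "j < n" by auto
  let ?d = "\<lambda>i j. (if i = j then 1 else 0) :: complex"
  have delta [simp]: "?d i k * x = (if i = k then x else 0)" "x * ?d i k = (if i = k then x else 0)"
    for i k x by simp_all
  have "(\<Sum>k<n. (?d i k - a * u i * cnj (u k)) * (?d k j - a * u k * cnj (u j)))
     = (\<Sum>k<n. ?d i k * ?d k j - ?d i k * (a * u k * cnj (u j)) - a * u i * cnj (u k) * ?d k j
          + (a * a * u i * cnj (u j)) * (u k * cnj (u k)))"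
    by (rule sum.cong) (auto simp: algebra_simps)
  also have "\<dots> = (\<Sum>k<n. ?d i k * ?d k j) - (\<Sum>k<n. ?d i k * (a * u k * cnj (u j)))
     - (\<Sum>k<n. a * u i * cnj (u k) * ?d k j) + (a * a * u i * cnj (u j)) * (\<Sum>k<n. u k * cnj (u k))"
    by (simp add: sum.distrib sum_subtractf sum_distrib_left)
  also have "(a * a * u i * cnj (u j)) * (\<Sum>k<n. u k * cnj (u k)) =
      (a * a * (\<Sum>k<n. u k * cnj (u k))) * (u i * cnj (u j))"
    by (simp only: ac_simps)
  also have "\<dots> = 2 * a * u i * cnj (u j)"
    unfolding assms by (simp only: ac_simps)
  also have "(\<Sum>k<n. ?d i k * ?d k j) - (\<Sum>k<n. ?d i k * (a * u k * cnj (u j)))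
     - (\<Sum>k<n. a * u i * cnj (u k) * ?d k j) + 2 * a * u i * cnj (u j) = ?d i j"
    using ij by simp
  finally show "(householder n a u * householder n a u) $$ (i, j) = 1\<^sub>m n $$ (i, j)"
    using ij unfolding householder_def by (subst index_mult_mat_lessThan[of _ n n _ n]) auto
qed (auto simp: householder_def)

text \<open>The initial state \<open>\<surd>t \<pi>\<^sub>0\<^sup>\<dagger> + \<surd>(1 - t) e\<^sub>2\<^sub>m\<close>; as \<open>\<pi>\<^sub>0\<close> is a row vector, its coordinates
  enter conjugated.\<close>
definition init_vec :: "nat \<Rightarrow> complex vec \<Rightarrow> real \<Rightarrow> nat \<Rightarrow> complex" where
  "init_vec m p t i =
     (if i < m then of_real (sqrt t) * cnj (p $ i) else if i = m+m then of_real (sqrt (1 - t)) else 0)"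

text \<open>The Householder reflection \<open>1 - 2uu\<^sup>\<dagger>/|u|\<^sup>2\<close> with \<open>u = e\<^sub>2\<^sub>m - init_vec\<close>, which exchanges
  \<open>e\<^sub>2\<^sub>m\<close> and the unit vector \<open>init_vec\<close>; here \<open>|u|\<^sup>2 = 2 - 2\<surd>(1 - t)\<close>.\<close>
definition init_unitary :: "nat \<Rightarrow> complex vec \<Rightarrow> real \<Rightarrow> complex mat" where
  "init_unitary m p t = householder (m+m+1) (of_real (1 / (1 - sqrt (1 - t))))
     (\<lambda>i. (if i = m+m then 1 else 0) - init_vec m p t i)"

lemma init_unitary_carrier [simp]:
  "init_unitary m p t \<in> carrier_mat (m+m+1) (m+m+1)"
  "init_unitary m p t \<in> carrier_mat (Suc (m+m)) (Suc (m+m))"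
  unfolding init_unitary_def householder_def by auto

lemma init_unitary_adjoint: "mat_adjoint (init_unitary m p t) = init_unitary m p t"
  by (rule eq_matI) (auto simp: init_unitary_def householder_def)

lemma init_unitary_square:
  assumes "0 < t" "t \<le> 1" "(\<Sum>i<m. (cmod (p $ i))\<^sup>2) = 1"
  shows "init_unitary m p t * init_unitary m p t = 1\<^sub>m (m+m+1)"
proof -
  define s where "s = sqrt (1 - t)"
  define u where "u i = (if i = m+m then 1 else 0) - init_vec m p t i" for i
  have s: "s < 1" "s * s = 1 - t" using assms(1,2) by (auto simp: s_def)
  have "u (m+m) = of_real (1 - s)" by (simp add: u_def init_vec_def s_def)
  then have last: "cmod (u (m+m)) = 1 - s" using s(1) by (simp del: of_real_diff)
  have "(\<Sum>k<m+m+1. (cmod (u k))\<^sup>2) =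
      (\<Sum>k<m. (cmod (u k))\<^sup>2) + (\<Sum>k<m. (cmod (u (m+k)))\<^sup>2) + (cmod (u (m+m)))\<^sup>2"
    by (simp add: sum_lessThan_add)
  also have "\<dots> = t * (\<Sum>k<m. (cmod (p $ k))\<^sup>2) + (1 - s)\<^sup>2"
    using assms(1) unfolding last by (simp add: u_def init_vec_def norm_mult power_mult_distrib sum_distrib_left)
  also have "\<dots> = 2 - 2 * s"
    using assms(3) s by (simp add: power2_eq_square algebra_simps)
  finally have norm_u: "(\<Sum>k<m+m+1. (cmod (u k))\<^sup>2) = 2 - 2 * s" .
  have "(\<Sum>k<m+m+1. u k * cnj (u k)) = (\<Sum>k<m+m+1. of_real ((cmod (u k))\<^sup>2))"
    by (rule sum.cong) (simp_all only: complex_norm_square)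
  also have "\<dots> = of_real (2 - 2 * s)"
    by (simp only: of_real_sum[symmetric] norm_u)
  finally have sum_u: "(\<Sum>k<m+m+1. u k * cnj (u k)) = of_real (2 - 2 * s)" .
  have "(1 / (1 - s)) * (1 / (1 - s)) * (2 - 2 * s) = 2 * (1 / (1 - s))"
    using s by (simp add: divide_simps)
  then have "complex_of_real ((1 / (1 - s)) * (1 / (1 - s)) * (2 - 2 * s)) = of_real (2 * (1 / (1 - s)))"
    by (rule arg_cong)
  then have "of_real (1 / (1 - s)) * of_real (1 / (1 - s)) * (\<Sum>k<m+m+1. u k * cnj (u k)) =
      2 * complex_of_real (1 / (1 - s))"
    unfolding sum_u by (simp only: of_real_mult of_real_numeral)
  then show ?thesis
    unfolding init_unitary_def u_def[symmetric] s_def[symmetric] by (rule householder_square)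
qed

lemma init_unitary_column:
  assumes "0 < t" "t \<le> 1" "i < m+m+1"
  shows "init_unitary m p t $$ (i, m+m) = init_vec m p t i"
proof -
  define s where "s = sqrt (1 - t)"
  define u where "u i = (if i = m+m then 1 else 0) - init_vec m p t i" for i
  have "1 - s \<noteq> 0" using assms(1,2) by (simp add: s_def)
  then have "(1 / (1 - s)) * (1 - s) = 1" by simp
  then have inv: "complex_of_real (1 / (1 - s)) * of_real (1 - s) = 1"
    by (simp only: of_real_mult[symmetric]) simp
  have "u (m+m) = of_real (1 - s)" by (simp add: u_def init_vec_def s_def)
  then have "init_unitary m p t $$ (i, m+m) =
      (if i = m+m then 1 else 0) - u i * (complex_of_real (1 / (1 - s)) * of_real (1 - s))"
    unfolding init_unitary_def householder_def u_def[symmetric] s_def[symmetric]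
    using assms(3) by (simp add: ac_simps)
  also have "\<dots> = init_vec m p t i" unfolding inv by (simp add: u_def)
  finally show ?thesis .
qed

lemma conj_lat_rho0:
  assumes "A \<in> carrier_mat n n" "q < n"
  shows "A * lat_rho0 n q * mat_adjoint A = mat n n (\<lambda>(i, j). A $$ (i, q) * cnj (A $$ (j, q)))"
proof -
  have [simp]: "x * (if P then 1 else 0) = (if P then x else 0)"
    "(if P then x else 0) * y = (if P then x * y else 0)" for x y :: complex and P
    by simp_all
  have col: "A * lat_rho0 n q = mat n n (\<lambda>(i, j). if j = q then A $$ (i, q) else 0)"
  proof (rule eq_matI)
    fix i j assume "i < dim_row (mat n n (\<lambda>(i, j). if j = q then A $$ (i, q) else 0))"
      "j < dim_col (mat n n (\<lambda>(i, j). if j = q then A $$ (i, q) else 0))"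
    then show "(A * lat_rho0 n q) $$ (i, j) = mat n n (\<lambda>(i, j). if j = q then A $$ (i, q) else 0) $$ (i, j)"
      using assms by (subst index_mult_mat_lessThan[of _ n n _ n]) (auto simp: lat_rho0_def)
  qed (use assms in \<open>auto simp: lat_rho0_def\<close>)
  show ?thesis
  proof (rule eq_matI)
    fix i j assume "i < dim_row (mat n n (\<lambda>(i, j). A $$ (i, q) * cnj (A $$ (j, q))))"
      "j < dim_col (mat n n (\<lambda>(i, j). A $$ (i, q) * cnj (A $$ (j, q))))"
    then show "(A * lat_rho0 n q * mat_adjoint A) $$ (i, j) =
        mat n n (\<lambda>(i, j). A $$ (i, q) * cnj (A $$ (j, q))) $$ (i, j)"
      unfolding col using assms by (subst index_mult_mat_lessThan[of _ n n _ n]) auto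
  qed (use assms in auto)
qed

lemma init_state:
  assumes "0 < t" "t \<le> 1"
  shows "init_unitary m p t * lat_rho0 (m+m+1) (m+m) * mat_adjoint (init_unitary m p t) =
    bordered m (of_real t \<cdot>\<^sub>m mon_rho0 m p)
      (mat (m+m) 1 (\<lambda>(i, _). init_vec m p t i * of_real (sqrt (1 - t))))
      (mat 1 (m+m) (\<lambda>(_, j). of_real (sqrt (1 - t)) * cnj (init_vec m p t j))) (of_real (1 - t))"
  (is "_ = ?R")
proof -
  have sq: "sqrt t * sqrt t = t" "sqrt (1 - t) * sqrt (1 - t) = 1 - t" using assms by auto
  have "init_unitary m p t * lat_rho0 (m+m+1) (m+m) * mat_adjoint (init_unitary m p t) =
      mat (m+m+1) (m+m+1) (\<lambda>(i, j). init_unitary m p t $$ (i, m+m) * cnj (init_unitary m p t $$ (j, m+m)))"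
    by (rule conj_lat_rho0) auto
  also have "\<dots> = mat (m+m+1) (m+m+1) (\<lambda>(i, j). init_vec m p t i * cnj (init_vec m p t j))"
    by (rule cong_mat) (auto simp: init_unitary_column[OF assms])
  also have "\<dots> = ?R"
  proof (rule eq_matI)
    fix i j assume "i < dim_row ?R" "j < dim_col ?R"
    then have "i < m+m+1" "j < m+m+1" by (auto simp: mon_rho0_def)
    then show "mat (m+m+1) (m+m+1) (\<lambda>(i, j). init_vec m p t i * cnj (init_vec m p t j)) $$ (i, j) = ?R $$ (i, j)"
      using sq by (subst index_bordered)
        (auto simp: init_vec_def mon_rho0_def of_real_mult[symmetric] simp del: of_real_mult)
  qed (auto simp: mon_rho0_def)
  finally show ?thesis .
qed

lemma mon_rho0_carrier [simp]:
  "mon_rho0 m p \<in> carrier_mat m m" "dim_row (mon_rho0 m p) = m" "dim_col (mon_rho0 m p) = m"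
  unfolding mon_rho0_def by auto

abbreviation mon_run ::
  "nat \<Rightarrow> ('a option \<Rightarrow> real set) \<Rightarrow> ('a option \<Rightarrow> real \<Rightarrow> complex mat) \<Rightarrow>
    complex mat \<Rightarrow> 'a list \<Rightarrow> complex mat"
  where "mon_run m V P \<rho> w \<equiv> foldl (\<lambda>\<rho> a. mon_step m (V (Some a)) (P (Some a)) \<rho>) \<rho> w"

lemma mon_run_carrier: "\<rho> \<in> carrier_mat m m \<Longrightarrow> mon_run m V P \<rho> w \<in> carrier_mat m m"
  by (induct w arbitrary: \<rho>) (auto simp: mon_step_def)

lemma mon_step_smult:
  assumes "\<rho> \<in> carrier_mat m m" "\<And>r. r \<in> Vc \<Longrightarrow> Pc r \<in> carrier_mat m m"
  shows "mon_step m Vc Pc (c \<cdot>\<^sub>m \<rho>) = c \<cdot>\<^sub>m mon_step m Vc Pc \<rho>"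
proof -
  have "mon_step m Vc Pc (c \<cdot>\<^sub>m \<rho>) = mat_sum m (\<lambda>r. c \<cdot>\<^sub>m (Pc r * \<rho> * Pc r)) Vc"
    unfolding mon_step_def
  proof (rule mat_sum_cong)
    fix r assume "r \<in> Vc"
    then show "Pc r * (c \<cdot>\<^sub>m \<rho>) * Pc r = c \<cdot>\<^sub>m (Pc r * \<rho> * Pc r)"
      using assms(1) assms(2)[of r] by (simp add: mult_smult_distrib[of _ m m _ m] mult_smult_assoc_mat[of _ m m _ m])
  qed
  also have "\<dots> = c \<cdot>\<^sub>m mon_step m Vc Pc \<rho>"
    unfolding mon_step_def by (intro mat_sum_smult mult_carrier_mat) (use assms in auto)
  finally show ?thesis .
qed

lemma mon_run_smult:
  assumes "\<And>a r. r \<in> V (Some a) \<Longrightarrow> P (Some a) r \<in> carrier_mat m m" "\<rho> \<in> carrier_mat m m"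
  shows "mon_run m V P (c \<cdot>\<^sub>m \<rho>) w = c \<cdot>\<^sub>m mon_run m V P \<rho> w"
  using assms(2)
proof (induct w arbitrary: \<rho>)
  case (Cons a w)
  then show ?case using assms(1) by (simp add: mon_step_smult) (simp add: mon_step_def)
qed simp

lemma lat_run_sim_meas:
  assumes "\<And>a. proj_family m (P (Some a)) (V (Some a))" "\<And>a. finite (V (Some a))"
    "\<rho> \<in> carrier_mat m m"
  shows "foldl (\<lambda>\<rho> a. lat_step (m+m+1) (1\<^sub>m (m+m+1)) (sim_meas m (P (Some a))
      (sorted_list_of_set (V (Some a)))) \<rho>) (block_diag m \<rho> y) w = block_diag m (mon_run m V P \<rho> w) y"
  using assms(3)
proof (induct w arbitrary: \<rho>)
  case (Cons a w)
  have "lat_step (m+m+1) (1\<^sub>m (m+m+1)) (sim_meas m (P (Some a)) (sorted_list_of_set (V (Some a))))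
      (block_diag m \<rho> y) = block_diag m (mon_step m (V (Some a)) (P (Some a)) \<rho>) y"
    unfolding mon_step_def using Cons(2) proj_family_carrier[OF assms(1)] assms(2)
    by (subst lat_step_sim_meas[where B = "0\<^sub>m (m+m) 1" and C = "0\<^sub>m 1 (m+m)"])
      (auto simp: block_diag_def)
  then show ?case using Cons by (simp add: mon_step_def)
qed simp

section \<open>The simulating Latvian automaton\<close>

locale mon_simulation =
  fixes m :: nat and Obs :: "'a option \<Rightarrow> complex mat" and V :: "'a option \<Rightarrow> real set"
    and P :: "'a option \<Rightarrow> real \<Rightarrow> complex mat" and pi0 :: "complex vec" and F :: "real set"
    and t :: real and acc_last :: bool
  assumes qfa: "mon_1qfa m Obs V P pi0 F" and t_pos: "0 < t" and t_le_one: "t \<le> 1"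
begin

definition sim_PF :: "complex mat" where
  "sim_PF = mat_sum m (P None) F"

definition sim_Qacc :: "nat set" where
  "sim_Qacc = {..<m} \<union> (if acc_last then {m+m} else {})"

definition sim_U :: "'a lsym \<Rightarrow> complex mat" where
  "sim_U c = (case c of Cent \<Rightarrow> init_unitary m pi0 t | Sym _ \<Rightarrow> 1\<^sub>m (m+m+1) | Dollar \<Rightarrow> proj_swap m sim_PF)"

definition sim_M :: "'a lsym \<Rightarrow> complex mat list" where
  "sim_M c = (case c of
       Cent \<Rightarrow> sim_meas m (\<lambda>_. 1\<^sub>m m) [()]
     | Sym a \<Rightarrow> sim_meas m (P (Some a)) (sorted_list_of_set (V (Some a)))
     | Dollar \<Rightarrow> [acc_proj (m+m+1) sim_Qacc, 1\<^sub>m (m+m+1) - acc_proj (m+m+1) sim_Qacc])"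

lemma proj_family_P: "proj_family m (P c) (V c)"
  using qfa proj_family_if_observable unfolding mon_1qfa_def by blast

lemma finite_V: "finite (V c)"
  using qfa unfolding mon_1qfa_def observable_def by blast

lemma P_carrier: "r \<in> V c \<Longrightarrow> P c r \<in> carrier_mat m m"
  using proj_family_carrier[OF proj_family_P] .

lemma norm_pi0: "(\<Sum>i<m. (cmod (pi0 $ i))\<^sup>2) = 1"
  using qfa unfolding mon_1qfa_def by blast

lemma F_subset: "F \<subseteq> V None"
  using qfa unfolding mon_1qfa_def by blast

lemma sim_PF_carrier: "sim_PF \<in> carrier_mat m m"
  unfolding sim_PF_def by simp

lemma sim_PF_adjoint: "mat_adjoint sim_PF = sim_PF"
  and sim_PF_idem: "sim_PF * sim_PF = sim_PF"
  unfolding sim_PF_def using proj_family_sum_subset[OF proj_family_P F_subset finite_V] by blast+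

lemma acc_proj_sim_Qacc: "acc_proj (m+m+1) sim_Qacc = block_diag m (1\<^sub>m m) (if acc_last then 1 else 0)"
  unfolding sim_Qacc_def by (rule acc_proj_eq_block_diag)

lemma unitary_sim_U: "unitary (m+m+1) (sim_U c)"
proof (cases c)
  case Cent
  then show ?thesis
    using init_unitary_square[OF t_pos t_le_one norm_pi0]
    by (simp add: sim_U_def unitary_def init_unitary_adjoint)
next
  case Dollar
  then show ?thesis
    using proj_swap_square[OF sim_PF_carrier sim_PF_idem] sim_PF_carrier
    by (simp add: sim_U_def unitary_def proj_swap_adjoint sim_PF_adjoint)
qed (simp add: sim_U_def unitary_def)

lemma proj_measurement_sim_M: "proj_measurement (m+m+1) (sim_M c)"
proof (cases c)
  case (Sym a)
  have "proj_measurement (m+m+1) (sim_meas m (P (Some a)) (sorted_list_of_set (V (Some a))))"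
    by (rule proj_measurement_sim_meas[OF distinct_sorted_list_of_set]) (simp add: proj_family_P finite_V)
  with Sym show ?thesis by (simp add: sim_M_def)
next
  case Cent
  then show ?thesis
    using proj_measurement_sim_meas[of "[()]" m "\<lambda>_. 1\<^sub>m m"] proj_family_singleton[of m "()"]
    by (simp add: sim_M_def)
next
  case Dollar
  show ?thesis
    unfolding Dollar sim_M_def lsym.case acc_proj_sim_Qacc by (rule proj_measurement_accept) simp
qed

lemma latvian_sim: "latvian (m+m+1) sim_U sim_M (m+m) sim_Qacc"
  unfolding latvian_def using unitary_sim_U proj_measurement_sim_M
  by (auto simp: sim_Qacc_def sim_M_def)

lemma sim_state_after_cent:
  "lat_step (m+m+1) (sim_U Cent) (sim_M Cent) (lat_rho0 (m+m+1) (m+m)) =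
    block_diag m (of_real t \<cdot>\<^sub>m mon_rho0 m pi0) (of_real (1 - t))"
proof -
  have \<rho>0: "of_real t \<cdot>\<^sub>m mon_rho0 m pi0 \<in> carrier_mat m m" by simp
  have "lat_step (m+m+1) (sim_U Cent) (sim_M Cent) (lat_rho0 (m+m+1) (m+m)) =
      block_diag m (mat_sum m (\<lambda>_. 1\<^sub>m m * (of_real t \<cdot>\<^sub>m mon_rho0 m pi0) * 1\<^sub>m m) (set [()])) (of_real (1 - t))"
    unfolding sim_U_def sim_M_def lsym.case
    by (rule lat_step_sim_meas[OF _ _ init_state[OF t_pos t_le_one]]) (use \<rho>0 in auto)
  also have "\<dots> = block_diag m (of_real t \<cdot>\<^sub>m mon_rho0 m pi0) (of_real (1 - t))"
    using \<rho>0 by (simp add: mat_sum_singleton)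
  finally show ?thesis .
qed

lemma sim_state_before_dollar:
  "foldl (\<lambda>\<rho> a. lat_step (m+m+1) (sim_U (Sym a)) (sim_M (Sym a)) \<rho>)
      (lat_step (m+m+1) (sim_U Cent) (sim_M Cent) (lat_rho0 (m+m+1) (m+m))) w =
    block_diag m (of_real t \<cdot>\<^sub>m mon_run m V P (mon_rho0 m pi0) w) (of_real (1 - t))"
proof -
  have fam: "\<And>a. proj_family m (P (Some a)) (V (Some a))" and fin: "\<And>a. finite (V (Some a))"
    and Pc: "\<And>a r. r \<in> V (Some a) \<Longrightarrow> P (Some a) r \<in> carrier_mat m m"
    by (simp_all add: proj_family_P finite_V P_carrier)
  show ?thesis
    unfolding sim_state_after_cent
    unfolding sim_U_def sim_M_def lsym.case
      lat_run_sim_meas[where P = P and V = V, OF fam fin smult_carrier_mat[OF mon_rho0_carrier(1)]]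
    by (simp add: mon_run_smult[where P = P and V = V, OF Pc])
qed

lemma lat_prob_sim:
  "lat_prob (m+m+1) sim_U sim_M (m+m) sim_Qacc w = t * mon_prob m V P pi0 F w + (if acc_last then 1 - t else 0)"
proof -
  define Y where "Y = mon_run m V P (mon_rho0 m pi0) w"
  have Y: "Y \<in> carrier_mat m m" unfolding Y_def by (simp add: mon_run_carrier)
  have "lat_prob (m+m+1) sim_U sim_M (m+m) sim_Qacc w =
      Re (mtrace (block_diag m (1\<^sub>m m) (if acc_last then 1 else 0) *
        (proj_swap m sim_PF * block_diag m (of_real t \<cdot>\<^sub>m Y) (of_real (1 - t)) * proj_swap m sim_PF)))"
    unfolding lat_prob_def Let_def sim_state_before_dollar acc_proj_sim_Qacc Y_def[symmetric]
    by (simp add: sim_U_def proj_swap_adjoint sim_PF_carrier sim_PF_adjoint)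
  also have "\<dots> = Re (mtrace (sim_PF * (of_real t \<cdot>\<^sub>m Y)) + (if acc_last then 1 else 0) * of_real (1 - t))"
    using Y by (simp add: mtrace_accept_proj_swap sim_PF_carrier sim_PF_idem)
  also have "mtrace (sim_PF * (of_real t \<cdot>\<^sub>m Y)) = of_real t * (\<Sum>r\<in>F. mtrace (P None r * Y))"
  proof -
    have F: "\<And>r. r \<in> F \<Longrightarrow> P None r \<in> carrier_mat m m"
      using qfa P_carrier unfolding mon_1qfa_def by blast
    have "mtrace (sim_PF * (of_real t \<cdot>\<^sub>m Y)) = of_real t * mtrace (sim_PF * Y)"
      using sim_PF_carrier Y by (simp add: mult_smult_distrib[of _ m m _ m] mtrace_smult[of _ m])
    also have "sim_PF * Y = mat_sum m (\<lambda>r. P None r * Y) F"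
      unfolding sim_PF_def using F Y by (intro mat_sum_mult) auto
    also have "mtrace \<dots> = (\<Sum>r\<in>F. mtrace (P None r * Y))"
      using F Y by (intro mtrace_mat_sum mult_carrier_mat) auto
    finally show ?thesis .
  qed
  finally show ?thesis
    unfolding mon_prob_def Let_def Y_def by (simp add: Re_sum sum_distrib_left)
qed

end

section \<open>Rescaling the cut-point\<close>

lemma cut_point_scale_bounds:
  fixes lam :: real
  shows "0 < 1 / (2 * max lam (1 - lam))" "1 / (2 * max lam (1 - lam)) \<le> 1"
  by (simp_all add: max_def)

lemma affine_cut_point_shift:
  fixes lam p :: real
  defines "t \<equiv> 1 / (2 * max lam (1 - lam))"
  shows "t * p + (if lam < 1/2 then 1 - t else 0) - 1/2 = t * (p - lam)"
proof -
  have "0 < max lam (1 - lam)" by (simp add: max_def)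
  then have scale: "t * max lam (1 - lam) = 1/2" unfolding t_def by simp
  show ?thesis
  proof (cases "lam < 1/2")
    case True
    then have "t * (1 - lam) = 1/2" using scale by (simp add: max_def)
    with True show ?thesis by (simp add: algebra_simps)
  next
    case False
    then have "max lam (1 - lam) = lam" by (auto simp: max_def)
    then have "t * lam = 1/2" using scale by simp
    with False show ?thesis by (simp add: algebra_simps)
  qed
qed

lemma isolated_cut_point_affine:
  fixes p q t lam \<delta> :: real
  assumes "q - 1/2 = t * (p - lam)" "0 < t" "A \<longleftrightarrow> p > lam" "\<bar>p - lam\<bar> \<ge> \<delta>"
  shows "A \<longleftrightarrow> q > 1/2" "\<bar>q - 1/2\<bar> \<ge> t * \<delta>"
proof -
  have "q > 1/2 \<longleftrightarrow> t * (p - lam) > 0" using assms(1) by linarith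
  also have "\<dots> \<longleftrightarrow> p > lam" using assms(2) by (simp add: zero_less_mult_iff)
  finally show "A \<longleftrightarrow> q > 1/2" using assms(3) by simp
  have "\<bar>q - 1/2\<bar> = t * \<bar>p - lam\<bar>" using assms(1,2) by (simp add: abs_mult)
  then show "\<bar>q - 1/2\<bar> \<ge> t * \<delta>" using assms(2,4) by (simp add: mult_left_mono)
qed

theorem theorem2:
  fixes m :: nat
    and Obs :: "'a::finite option \<Rightarrow> complex mat"
    and V :: "'a option \<Rightarrow> real set"
    and P :: "'a option \<Rightarrow> real \<Rightarrow> complex mat"
    and pi0 :: "complex vec"
    and F :: "real set"
    and L :: "'a list set"
    and lam \<delta> :: real
  assumes "mon_1qfa m Obs V P pi0 F"
    and "\<delta> > 0"
    and "\<forall>x. (x \<in> L \<longleftrightarrow> mon_prob m V P pi0 F x > lam) \<and> \<bar>mon_prob m V P pi0 F x - lam\<bar> \<ge> \<delta>"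
  shows "\<exists>(n::nat) (U :: 'a lsym \<Rightarrow> complex mat) (M :: 'a lsym \<Rightarrow> complex mat list) q0 Qacc.
           latvian n U M q0 Qacc \<and>
           (\<forall>x. (x \<in> L \<longleftrightarrow> lat_prob n U M q0 Qacc x > 1/2) \<and>
                \<bar>lat_prob n U M q0 Qacc x - 1/2\<bar> \<ge> \<delta> / (2 * max lam (1 - lam)))"
proof -
  define t where "t = 1 / (2 * max lam (1 - lam))"
  interpret sim: mon_simulation m Obs V P pi0 F t "lam < 1/2"
    using assms(1) cut_point_scale_bounds unfolding t_def by unfold_locales
  have "lat_prob (m+m+1) sim.sim_U sim.sim_M (m+m) sim.sim_Qacc x - 1/2 = t * (mon_prob m V P pi0 F x - lam)"
    for x unfolding sim.lat_prob_sim unfolding t_def by (rule affine_cut_point_shift)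
  note rescaled = isolated_cut_point_affine[OF this sim.t_pos, where A = "x \<in> L" and \<delta> = \<delta> for x]
  have "t * \<delta> = \<delta> / (2 * max lam (1 - lam))" unfolding t_def by simp
  then show ?thesis
    using sim.latvian_sim rescaled assms(3) by metis
qed

end
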